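(* Let $\beta>0$ and let $v_2,v_3$ satisfy (i$_2$)–(iii$_2$), (i$_3$)–(iv$_3$) for some $\varepsilon>0$. If $C_N$ is a minimizer of $\mathcal{F}_\beta$ with $N$ particles and $G_{\rm nat}$ is its natural bond graph, then $F_\beta(G_{\rm nat})\le m_\beta(N)$; equivalently $\mathcal{F}_\beta(C_N)\le -2N+\frac12 m_\beta(N)$.
   Context: Substrate $\mathcal{L}^-=\mathbb{Z}^2\cap\{x_2\le0\}$. Configuration of $N$ particles: $N$ distinct points of $\{x_2>0\}$. $\theta_{x,y,z}\in[0,2\pi)$: clockwise angle between $x-y$ and $z-y$. Potentials: (i$_2$) $\min v_2=v_2(1)=-1$, $v_2(r)>-1$ for $r\ne1$; (ii$_2$) there is $r_0\in(1,\sqrt2)$ with $v_2=0$ on $[r_0,\infty)$; (iii$_2$) $v_2>\varepsilon^{-1}$ on $[0,1-\varepsilon]$; (i$_3$) $v_3(\theta)=v_3(2\pi-\theta)$; (ii$_3$) $v_3(k\pi/2)=0$, $k=1,2,3$, $v_3>0$ elsewhere; (iii$_3$) $v_3(\theta)\ge4(\pi/10-\varepsilon)^{-1}|\theta-\pi|$ on $[\pi-\varepsilon,\pi+\varepsilon]$, equality only at $\pi$; (iv$_3$) outside the $\varepsilon$-neighbourhoods of $\pi/2,\pi,3\pi/2$, $v_3>\max\{1,2\beta\}\frac{4}{(1-\varepsilon)^2}(\sqrt2+\frac12)^2$. Energy $\mathcal{F}_\beta(C_N)=\frac12\sum_{x_i\ne x_j}v_2(|x_i-x_j|)+\beta\sum_{x_i\in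 C_N,z\in\mathcal{L}^-}v_2(|x_i-z|)+\frac12\sum_{(x,y,z)}v_3(\theta_{x,y,z})$, the last sum over triples of pairwise distinct points of $C_N\cup\mathcal{L}^-$ with $|x-y|,|y-z|<r_0$. Minimizer: minimal energy among configurations with $N$ particles. Natural bond graph $G_{\rm nat}=(C_N,E_{\rm nat})$, $E_{\rm nat}=\{\{x,y\}:x\ne y\in C_N,|x-y|\le r_0\}$. For a graph $(V,E)$: $\mathcal{N}(x,E)=\{y\in V:\{x,y\}\in E\}$, $\mathcal{N}_{\mathcal{L}^-}(x)=\{y\in\mathcal{L}^-:|x-y|\le r_0\}$, $F_{{\rm bond},\beta}=\sum_{x\in V}(4-\#\mathcal{N}(x,E)-2\beta\#\mathcal{N}_{\mathcal{L}^-}(x))$, $F_{{\rm ex},\beta}=\sum_{\{x,y\}\in E}(v_2(|x-y|)+1)+2\beta\sum_{x\in V,y\in\mathcal{N}_{\mathcal{L}^-}(x)}(v_2(|x-y|)+1)+\sum v_3(\theta_{x,y,z})$ (the last sum as in $\mathcal{F}_\beta$ for $G_{\rm nat}$), and $F_\beta=F_{{\rm bond},\beta}+F_{{\rm ex},\beta}$; for the natural bond graph $2\mathcal{F}_\beta(C_N)=-4N+F_\beta(G_{\rm nat})$. $m_\beta(N)=\min_{h\in\{1,\dots,N\}}(2h+2(1-\beta)\lceil N/h\rceil)$. *)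

theory Defs
  imports "HOL-Analysis.Analysis"
begin

text \<open>Points of the plane are complex numbers; the second coordinate x2 is Im x.\<close>

definition substrate :: "complex set" where
  "substrate = {z. Re z \<in> \<int> \<and> Im z \<in> \<int> \<and> Im z \<le> 0}"

text \<open>Clockwise angle between x - y and z - y, taken in [0, 2 pi).\<close>
definition theta :: "complex \<Rightarrow> complex \<Rightarrow> complex \<Rightarrow> real" where
  "theta x y z = (let a = Arg ((x - y) / (z - y)) in if a < 0 then a + 2 * pi else a)"

definition is_config :: "nat \<Rightarrow> complex set \<Rightarrow> bool" where
  "is_config N C \<longleftrightarrow> finite C \<and> card C = N \<and> (\<forall>x\<in>C. Im x > 0)"

definition triples :: "real \<Rightarrow> complex set \<Rightarrow> (complex \<times> complex \<times> complex) set" where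
  "triples r0 C = {(x, y, z). x \<in> C \<union> substrate \<and> y \<in> C \<union> substrate \<and> z \<in> C \<union> substrate
      \<and> x \<noteq> y \<and> y \<noteq> z \<and> x \<noteq> z \<and> dist x y < r0 \<and> dist y z < r0}"

definition three_body :: "(real \<Rightarrow> real) \<Rightarrow> real \<Rightarrow> complex set \<Rightarrow> real" where
  "three_body v3 r0 C = infsum (\<lambda>(x, y, z). v3 (theta x y z)) (triples r0 C)"

definition energy :: "(real \<Rightarrow> real) \<Rightarrow> (real \<Rightarrow> real) \<Rightarrow> real \<Rightarrow> real \<Rightarrow> complex set \<Rightarrow> real" where
  "energy v2 v3 r0 \<beta> C =
     1/2 * (\<Sum>x\<in>C. \<Sum>y\<in>C - {x}. v2 (dist x y))
     + \<beta> * infsum (\<lambda>(x, z). v2 (dist x z)) (C \<times> substrate)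
     + 1/2 * three_body v3 r0 C"

definition is_minimizer ::
  "(real \<Rightarrow> real) \<Rightarrow> (real \<Rightarrow> real) \<Rightarrow> real \<Rightarrow> real \<Rightarrow> nat \<Rightarrow> complex set \<Rightarrow> bool" where
  "is_minimizer v2 v3 r0 \<beta> N C \<longleftrightarrow> is_config N C \<and>
     (\<forall>C'. is_config N C' \<longrightarrow> energy v2 v3 r0 \<beta> C \<le> energy v2 v3 r0 \<beta> C')"

definition nbrs :: "complex set \<Rightarrow> complex set set \<Rightarrow> complex \<Rightarrow> complex set" where
  "nbrs V E x = {y\<in>V. {x, y} \<in> E}"

definition nbrs_sub :: "real \<Rightarrow> complex \<Rightarrow> complex set" where
  "nbrs_sub r0 x = {y\<in>substrate. dist x y \<le> r0}"

definition nat_edges :: "real \<Rightarrow> complex set \<Rightarrow> complex set set" where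
  "nat_edges r0 C = {{x, y} | x y. x \<in> C \<and> y \<in> C \<and> x \<noteq> y \<and> dist x y \<le> r0}"

definition F_bond :: "real \<Rightarrow> real \<Rightarrow> complex set \<Rightarrow> complex set set \<Rightarrow> real" where
  "F_bond r0 \<beta> V E =
     (\<Sum>x\<in>V. 4 - real (card (nbrs V E x)) - 2 * \<beta> * real (card (nbrs_sub r0 x)))"

text \<open>The bond sum is taken over ordered pairs (each bond counted from both endpoints),
  which is what makes the identity 2 energy = -4N + F hold.\<close>
definition F_ex ::
  "(real \<Rightarrow> real) \<Rightarrow> (real \<Rightarrow> real) \<Rightarrow> real \<Rightarrow> real \<Rightarrow> complex set \<Rightarrow> complex set set \<Rightarrow> real" where
  "F_ex v2 v3 r0 \<beta> V E =
     (\<Sum>x\<in>V. \<Sum>y\<in>nbrs V E x. v2 (dist x y) + 1)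
     + 2 * \<beta> * (\<Sum>x\<in>V. \<Sum>y\<in>nbrs_sub r0 x. v2 (dist x y) + 1)
     + three_body v3 r0 V"

definition F_graph ::
  "(real \<Rightarrow> real) \<Rightarrow> (real \<Rightarrow> real) \<Rightarrow> real \<Rightarrow> real \<Rightarrow> complex set \<Rightarrow> complex set set \<Rightarrow> real" where
  "F_graph v2 v3 r0 \<beta> V E = F_bond r0 \<beta> V E + F_ex v2 v3 r0 \<beta> V E"

definition m_beta :: "real \<Rightarrow> nat \<Rightarrow> real" where
  "m_beta \<beta> N = Min ((\<lambda>h. 2 * real h + 2 * (1 - \<beta>) * real (nat \<lceil>real N / real h\<rceil>)) ` {1..N})"

end

theory Submission
  imports Defs
begin

text \<open>Since \<open>v2\<close> vanishes from \<open>r0\<close> on, the \<open>+1\<close> in each bond term of \<open>F_ex\<close> cancels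
  against the bond count in \<open>F_bond\<close>, so \<open>F_\<beta>(G_nat) = 4N + 2 energy(C)\<close> for every
  configuration and both claims reduce to the energy bound. A minimizer has energy at most that
  of any competitor; for each height \<open>h\<close> we stack the \<open>N\<close> particles on the Gaussian integers
  above the substrate in columns of height \<open>h\<close>, filled bottom to top and left to right.
  On the lattice every bond angle is a multiple of \<open>pi/2\<close>, so \<open>v3\<close> contributes nothing, every
  unit bond contributes \<open>-1\<close>, and every particle of the bottom row gains \<open>-\<beta>\<close> from the
  substrate atom below it. There are \<open>\<lceil>N/h\<rceil>\<close> columns, hence \<open>\<lceil>N/h\<rceil>\<close> particles on the bottom
  row, at least \<open>N - \<lceil>N/h\<rceil>\<close> vertical and at least \<open>N - h\<close> horizontal bonds, so the energy
  is at most \<open>-2N + h + (1 - \<beta>)\<lceil>N/h\<rceil>\<close>, which is \<open>-2N + m_\<beta>(N)/2\<close> for the best \<open>h\<close>.\<close>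

section \<open>Gaussian integers\<close>

definition gaussian_ints :: "complex set" where
  "gaussian_ints = {z. Re z \<in> \<int> \<and> Im z \<in> \<int>}"

lemma gaussian_ints_diff: "x \<in> gaussian_ints \<Longrightarrow> y \<in> gaussian_ints \<Longrightarrow> x - y \<in> gaussian_ints"
  unfolding gaussian_ints_def by auto

lemma substrate_subset_gaussian_ints: "substrate \<subseteq> gaussian_ints"
  unfolding substrate_def gaussian_ints_def by auto

lemma gaussian_intsE:
  assumes "z \<in> gaussian_ints"
  obtains a b :: int where "z = Complex (of_int a) (of_int b)"
  using assms unfolding gaussian_ints_def by (metis Ints_cases complex.collapse mem_Collect_eq)

lemma gaussian_int_norm_less_sqrt2:
  assumes "u \<in> gaussian_ints" "u \<noteq> 0" "norm u < sqrt 2"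
  shows "u \<in> {1, -1, \<i>, -\<i>}"
proof -
  obtain a b :: int where u: "u = Complex (of_int a) (of_int b)"
    using assms(1) by (rule gaussian_intsE)
  have "real_of_int (a\<^sup>2 + b\<^sup>2) < 2"
    using assms(3) by (simp add: u cmod_def)
  then have sq: "a\<^sup>2 + b\<^sup>2 \<le> 1" by linarith
  then have "a\<^sup>2 \<le> 1" "b\<^sup>2 \<le> 1"
    using zero_le_power2[of a] zero_le_power2[of b] by linarith+
  then have "a \<in> {-1, 0, 1}" "b \<in> {-1, 0, 1}"
    by (auto simp: abs_square_le_1 abs_le_iff)
  with sq assms(2) show ?thesis by (auto simp: u complex_eq_iff)
qed

lemma gaussian_ints_dist_less_sqrt2:
  assumes "x \<in> gaussian_ints" "y \<in> gaussian_ints" "x \<noteq> y" "dist x y < sqrt 2"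
  shows "x - y \<in> {1, -1, \<i>, -\<i>}"
  using gaussian_int_norm_less_sqrt2[OF gaussian_ints_diff[OF assms(1,2)]] assms(3,4)
  by (simp add: dist_norm)

lemma theta_gaussian_ints:
  assumes "x \<in> gaussian_ints" "y \<in> gaussian_ints" "z \<in> gaussian_ints"
    and "x \<noteq> y" "y \<noteq> z" "x \<noteq> z" "dist x y < sqrt 2" "dist y z < sqrt 2"
  shows "theta x y z \<in> {pi / 2, pi, 3 * pi / 2}"
proof -
  have "x - y \<in> {1, -1, \<i>, -\<i>}" "z - y \<in> {1, -1, \<i>, -\<i>}" "x - y \<noteq> z - y"
    using gaussian_ints_dist_less_sqrt2 assms by (auto simp: dist_commute)
  then have "(x - y) / (z - y) \<in> {-1, \<i>, -\<i>}"
    by (auto simp: divide_complex_def complex_eq_iff)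
  then have "Arg ((x - y) / (z - y)) \<in> {pi, pi / 2, - pi / 2}"
    using Arg_of_real[of "-1"] by auto
  then show ?thesis
    unfolding theta_def Let_def by auto (use pi_gt_zero in linarith)
qed

lemma finite_gaussian_ints_cball: "finite (gaussian_ints \<inter> cball x r)"
proof -
  let ?box = "{\<lfloor>Re x - r\<rfloor>..\<lceil>Re x + r\<rceil>} \<times> {\<lfloor>Im x - r\<rfloor>..\<lceil>Im x + r\<rceil>}"
  have "gaussian_ints \<inter> cball x r \<subseteq> (\<lambda>(a, b). Complex (of_int a) (of_int b)) ` ?box"
  proof
    fix z assume z: "z \<in> gaussian_ints \<inter> cball x r"
    then obtain a b :: int where ab: "z = Complex (of_int a) (of_int b)"
      using gaussian_intsE by blast
    have "\<bar>Re (x - z)\<bar> \<le> r" "\<bar>Im (x - z)\<bar> \<le> r"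
      using z abs_Re_le_cmod[of "x - z"] abs_Im_le_cmod[of "x - z"] by (auto simp: dist_norm)
    then have "(a, b) \<in> ?box"
      by (auto simp: ab floor_le_iff le_ceiling_iff)
    then show "z \<in> (\<lambda>(a, b). Complex (of_int a) (of_int b)) ` ?box"
      using ab by force
  qed
  then show ?thesis
    by (rule finite_subset) auto
qed

section \<open>The bond-counting identity\<close>

lemma finite_nbrs_sub: "finite (nbrs_sub r0 x)"
proof (rule finite_subset)
  show "nbrs_sub r0 x \<subseteq> gaussian_ints \<inter> cball x r0"
    unfolding nbrs_sub_def using substrate_subset_gaussian_ints by auto
qed (rule finite_gaussian_ints_cball)

lemma nbrs_nat_edges:
  "x \<in> C \<Longrightarrow> nbrs C (nat_edges r0 C) x = {y \<in> C. y \<noteq> x \<and> dist x y \<le> r0}"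
  unfolding nbrs_def nat_edges_def by (auto simp: doubleton_eq_iff dist_commute)

lemma substrate_infsum_eq_sum_nbrs_sub:
  fixes v2 :: "real \<Rightarrow> real"
  assumes "finite C" and v2_vanishes: "\<And>r. r \<ge> r0 \<Longrightarrow> v2 r = 0"
  shows "infsum (\<lambda>(x, z). v2 (dist x z)) (C \<times> substrate)
    = (\<Sum>x\<in>C. \<Sum>z\<in>nbrs_sub r0 x. v2 (dist x z))"
proof -
  let ?T = "SIGMA x:C. nbrs_sub r0 x"
  have "infsum (\<lambda>(x, z). v2 (dist x z)) (C \<times> substrate) = infsum (\<lambda>(x, z). v2 (dist x z)) ?T"
    by (rule infsum_cong_neutral) (auto simp: nbrs_sub_def intro!: v2_vanishes)
  also have "\<dots> = (\<Sum>x\<in>C. \<Sum>z\<in>nbrs_sub r0 x. v2 (dist x z))"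
    using assms(1) finite_nbrs_sub by (simp add: sum.Sigma)
  finally show ?thesis .
qed

lemma F_graph_nat_edges:
  assumes "finite C" and v2_vanishes: "\<And>r. r \<ge> r0 \<Longrightarrow> v2 r = 0"
  shows "F_graph v2 v3 r0 \<beta> C (nat_edges r0 C) = 4 * real (card C) + 2 * energy v2 v3 r0 \<beta> C"
proof -
  let ?nb = "nbrs C (nat_edges r0 C)"
  have "finite (?nb x)" for x
    unfolding nbrs_def using assms(1) by auto
  then have bonds: "(\<Sum>y\<in>?nb x. v2 (dist x y) + 1) = (\<Sum>y\<in>?nb x. v2 (dist x y)) + real (card (?nb x))"
    and substrate_bonds: "(\<Sum>y\<in>nbrs_sub r0 x. v2 (dist x y) + 1)
      = (\<Sum>y\<in>nbrs_sub r0 x. v2 (dist x y)) + real (card (nbrs_sub r0 x))" for x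
    using finite_nbrs_sub by (simp_all add: sum.distrib)
  have pairs: "(\<Sum>y\<in>C - {x}. v2 (dist x y)) = (\<Sum>y\<in>?nb x. v2 (dist x y))" if "x \<in> C" for x
    unfolding nbrs_nat_edges[OF that] using assms(1)
    by (intro sum.mono_neutral_right) (auto intro!: v2_vanishes)
  have "energy v2 v3 r0 \<beta> C = 1/2 * (\<Sum>x\<in>C. \<Sum>y\<in>?nb x. v2 (dist x y))
      + \<beta> * (\<Sum>x\<in>C. \<Sum>y\<in>nbrs_sub r0 x. v2 (dist x y)) + 1/2 * three_body v3 r0 C"
    unfolding energy_def using assms by (simp add: pairs substrate_infsum_eq_sum_nbrs_sub)
  then show ?thesis
    unfolding F_graph_def F_bond_def F_ex_def bonds substrate_bonds
    by (simp add: sum.distrib sum_subtractf sum_distrib_left algebra_simps)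
qed

section \<open>Configurations on the Gaussian integers\<close>

definition unit_bonds :: "complex set \<Rightarrow> (complex \<times> complex) set" where
  "unit_bonds S = {(x, y) \<in> S \<times> S. dist x y = 1}"

lemma three_body_gaussian_ints:
  assumes "C \<subseteq> gaussian_ints" "r0 \<le> sqrt 2"
    and "v3 (pi / 2) = 0" "v3 pi = 0" "v3 (3 * pi / 2) = 0"
  shows "three_body v3 r0 C = 0"
  unfolding three_body_def
proof (rule infsum_0, clarify)
  fix x y z assume "(x, y, z) \<in> triples r0 C"
  then have "theta x y z \<in> {pi / 2, pi, 3 * pi / 2}"
    using assms(1,2) substrate_subset_gaussian_ints
    by (intro theta_gaussian_ints) (auto simp: triples_def)
  with assms(3-5) show "v3 (theta x y z) = 0" by (metis empty_iff insertE)
qed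

lemma v2_dist_gaussian_ints:
  assumes "v2 1 = -1" "\<And>r. r \<ge> r0 \<Longrightarrow> v2 r = 0" "r0 \<le> sqrt 2"
    and "x \<in> gaussian_ints" "y \<in> gaussian_ints" "x \<noteq> y"
  shows "v2 (dist x y) = (if dist x y = 1 then -1 else 0)"
proof (cases "dist x y < sqrt 2")
  case True
  then have "x - y \<in> {1, -1, \<i>, -\<i>}"
    using gaussian_ints_dist_less_sqrt2 assms(4-6) by blast
  then show ?thesis
    using assms(1) by (auto simp: dist_norm)
next
  case False
  then show ?thesis
    using assms(2,3) by auto
qed

lemma nbrs_sub_gaussian_int:
  assumes "1 \<le> r0" "r0 < sqrt 2" "x \<in> gaussian_ints" "Im x > 0"
  shows "nbrs_sub r0 x = (if Im x = 1 then {x - \<i>} else {})"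
proof -
  have "z = x - \<i> \<and> Im x = 1" if z: "z \<in> nbrs_sub r0 x" for z
  proof -
    have "z \<in> gaussian_ints" "Im z \<le> 0" "dist x z < sqrt 2"
      using z assms(2) substrate_subset_gaussian_ints unfolding nbrs_sub_def substrate_def by auto
    moreover have "x \<noteq> z"
      using \<open>Im z \<le> 0\<close> assms(4) by auto
    ultimately have "x - z \<in> {1, -1, \<i>, -\<i>}" "Im (x - z) > 0"
      using gaussian_ints_dist_less_sqrt2 assms(3,4) by auto
    then have "x - z = \<i>" by (auto simp: complex_eq_iff)
    moreover have "Im x \<in> \<int>" "Im z \<in> \<int>"
      using \<open>z \<in> gaussian_ints\<close> assms(3) unfolding gaussian_ints_def by auto
    ultimately show ?thesis
      using \<open>Im z \<le> 0\<close> assms(4) by (auto elim!: Ints_cases simp: complex_eq_iff)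
  qed
  moreover have "x - \<i> \<in> nbrs_sub r0 x" if "Im x = 1"
    using that assms(1,3) unfolding nbrs_sub_def substrate_def gaussian_ints_def
    by (auto simp: dist_norm)
  ultimately show ?thesis by auto
qed

lemma energy_gaussian_ints_config:
  assumes S: "finite S" "S \<subseteq> gaussian_ints" "\<forall>x\<in>S. Im x > 0"
    and v2: "v2 1 = -1" "\<And>r. r \<ge> r0 \<Longrightarrow> v2 r = 0" and r0: "1 < r0" "r0 < sqrt 2"
    and v3: "v3 (pi / 2) = 0" "v3 pi = 0" "v3 (3 * pi / 2) = 0"
  shows "energy v2 v3 r0 \<beta> S
    = - real (card (unit_bonds S)) / 2 - \<beta> * real (card {x \<in> S. Im x = 1})"
proof -
  have pairs: "(\<Sum>y\<in>S - {x}. v2 (dist x y)) = - real (card {y \<in> S. dist x y = 1})"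
    if "x \<in> S" for x
  proof -
    have "(\<Sum>y\<in>S - {x}. v2 (dist x y)) = (\<Sum>y\<in>S - {x}. if dist x y = 1 then -1 else 0)"
      using that S(2) r0 by (intro sum.cong refl v2_dist_gaussian_ints v2) auto
    also have "\<dots> = - real (card {y \<in> S - {x}. dist x y = 1})"
      using S(1) by (simp add: sum.If_cases Int_def)
    also have "{y \<in> S - {x}. dist x y = 1} = {y \<in> S. dist x y = 1}"
      by auto
    finally show ?thesis .
  qed
  have "unit_bonds S = (SIGMA x:S. {y \<in> S. dist x y = 1})"
    unfolding unit_bonds_def by auto
  then have "card (unit_bonds S) = (\<Sum>x\<in>S. card {y \<in> S. dist x y = 1})"
    using S(1) by simp
  then have "(\<Sum>x\<in>S. \<Sum>y\<in>S - {x}. v2 (dist x y)) = - real (card (unit_bonds S))"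
    by (simp add: pairs sum_negf)
  moreover have "(\<Sum>z\<in>nbrs_sub r0 x. v2 (dist x z)) = (if Im x = 1 then -1 else 0)" if "x \<in> S" for x
    using nbrs_sub_gaussian_int[of r0 x] that S r0 v2(1) by (auto simp: dist_norm)
  then have "(\<Sum>x\<in>S. \<Sum>z\<in>nbrs_sub r0 x. v2 (dist x z)) = - real (card {x \<in> S. Im x = 1})"
    using S(1) by (simp add: sum.If_cases Int_def)
  moreover have "infsum (\<lambda>(x, z). v2 (dist x z)) (S \<times> substrate)
      = (\<Sum>x\<in>S. \<Sum>z\<in>nbrs_sub r0 x. v2 (dist x z))"
    by (rule substrate_infsum_eq_sum_nbrs_sub[OF S(1)]) (rule v2(2))
  moreover have "three_body v3 r0 S = 0"
    using S(2) r0 v3 by (intro three_body_gaussian_ints) auto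
  ultimately show ?thesis
    unfolding energy_def by simp
qed

lemma card_unit_bonds_ge:
  assumes "finite S"
  shows "2 * card {x \<in> S. x + \<i> \<in> S} + 2 * card {x \<in> S. x + 1 \<in> S} \<le> card (unit_bonds S)"
proof -
  define U where "U = {x \<in> S. x + \<i> \<in> S}"
  define R where "R = {x \<in> S. x + 1 \<in> S}"
  define up where "up = (\<lambda>x. (x, x + \<i>)) ` U"
  define down where "down = (\<lambda>x. (x + \<i>, x)) ` U"
  define right where "right = (\<lambda>x. (x, x + 1)) ` R"
  define left where "left = (\<lambda>x. (x + 1, x)) ` R"
  have "finite U" "finite R"
    using assms unfolding U_def R_def by auto
  then have fin: "finite up" "finite down" "finite right" "finite left"
    unfolding up_def down_def right_def left_def by auto
  have card: "card up = card U" "card down = card U" "card right = card R" "card left = card R"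
    unfolding up_def down_def right_def left_def by (auto intro!: card_image simp: inj_on_def)
  have "up \<inter> down = {}" "(up \<union> down) \<inter> right = {}" "(up \<union> down \<union> right) \<inter> left = {}"
    unfolding up_def down_def right_def left_def by (auto simp: complex_eq_iff)
  then have "card (up \<union> down \<union> right \<union> left) = 2 * card U + 2 * card R"
    using fin card by (simp add: card_Un_disjoint)
  moreover have "up \<union> down \<union> right \<union> left \<subseteq> unit_bonds S"
    unfolding unit_bonds_def up_def down_def right_def left_def U_def R_def
    by (auto simp: dist_norm)
  moreover have "finite (unit_bonds S)"
    using assms unfolding unit_bonds_def by (auto intro: finite_subset[of _ "S \<times> S"])
  ultimately show ?thesis
    unfolding U_def R_def by (metis card_mono)
qed

section \<open>The column competitor\<close>

definition column_point :: "nat \<Rightarrow> nat \<Rightarrow> complex" where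
  "column_point h n = Complex (real (n div h)) (real (n mod h) + 1)"

definition column_config :: "nat \<Rightarrow> nat \<Rightarrow> complex set" where
  "column_config h N = column_point h ` {..<N}"

lemma inj_column_point: "inj (column_point h)"
proof
  fix a b assume "column_point h a = column_point h b"
  then have "a div h = b div h" "a mod h = b mod h"
    unfolding column_point_def by (auto simp: complex_eq_iff)
  then show "a = b" by (metis div_mult_mod_eq)
qed

lemma Im_column_point: "Im (column_point h n) = real (n mod h) + 1"
  unfolding column_point_def by simp

lemma column_point_Suc: "\<not> h dvd Suc n \<Longrightarrow> column_point h (Suc n) = column_point h n + \<i>"
  unfolding column_point_def by (auto simp: complex_eq_iff div_Suc mod_Suc dvd_eq_mod_eq_0)

lemma column_point_add_height: "0 < h \<Longrightarrow> column_point h (n + h) = column_point h n + 1"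
  unfolding column_point_def by (simp add: complex_eq_iff)

lemma column_config_subset_gaussian_ints: "column_config h N \<subseteq> gaussian_ints"
  unfolding column_config_def column_point_def gaussian_ints_def by auto

lemma card_column_point_image: "card (column_point h ` A) = card A"
  by (rule card_image[OF inj_on_subset[OF inj_column_point subset_UNIV]])

lemma is_config_column_config: "is_config N (column_config h N)"
  unfolding is_config_def column_config_def
  by (simp add: card_column_point_image Im_column_point add_pos_nonneg)

lemma card_multiples_lessThan:
  assumes "0 < h"
  shows "card {n \<in> {..<N}. h dvd n} = nat \<lceil>real N / real h\<rceil>"
proof -
  let ?c = "nat \<lceil>real N / real h\<rceil>"
  have iff: "j < ?c \<longleftrightarrow> h * j < N" for j
  proof -
    have "j < ?c \<longleftrightarrow> real j < real N / real h"
      by (simp add: zless_nat_eq_int_zless less_ceiling_iff)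
    also have "\<dots> \<longleftrightarrow> real (h * j) < real N"
      using assms by (simp add: pos_less_divide_eq mult.commute)
    also have "\<dots> \<longleftrightarrow> h * j < N"
      by (rule of_nat_less_iff)
    finally show ?thesis .
  qed
  have "{n \<in> {..<N}. h dvd n} = (\<lambda>j. h * j) ` {..<?c}"
  proof (intro set_eqI iffI)
    fix n assume n: "n \<in> {n \<in> {..<N}. h dvd n}"
    then obtain j where "n = h * j"
      by (auto elim: dvdE)
    moreover have "j < ?c"
      using n iff \<open>n = h * j\<close> by simp
    ultimately show "n \<in> (\<lambda>j. h * j) ` {..<?c}"
      by blast
  next
    fix n assume "n \<in> (\<lambda>j. h * j) ` {..<?c}"
    then obtain j where "n = h * j" "j < ?c"
      by blast
    then show "n \<in> {n \<in> {..<N}. h dvd n}"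
      using iff[of j] by simp
  qed
  then show ?thesis
    using assms by (simp add: card_image inj_on_def)
qed

lemma card_column_config_bottom:
  assumes "0 < h"
  shows "card {x \<in> column_config h N. Im x = 1} = nat \<lceil>real N / real h\<rceil>"
proof -
  have "{x \<in> column_config h N. Im x = 1} = column_point h ` {n \<in> {..<N}. h dvd n}"
    unfolding column_config_def by (auto simp: Im_column_point dvd_eq_mod_eq_0)
  then show ?thesis
    using card_multiples_lessThan[OF assms] by (simp only: card_column_point_image)
qed

lemma card_column_config_vertical:
  fixes h N :: nat
  assumes "0 < h"
  defines "S \<equiv> column_config h N"
  shows "N \<le> card {x \<in> S. x + \<i> \<in> S} + nat \<lceil>real N / real h\<rceil>"
proof -
  define A where "A = {n. Suc n < N \<and> \<not> h dvd Suc n}"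
  have "column_point h ` A \<subseteq> {x \<in> S. x + \<i> \<in> S}"
  proof
    fix x assume "x \<in> column_point h ` A"
    then obtain n where x: "x = column_point h n" and "n \<in> A"
      by blast
    then have "x + \<i> = column_point h (Suc n)" "n < N" "Suc n < N"
      unfolding A_def by (simp_all add: column_point_Suc)
    then show "x \<in> {x \<in> S. x + \<i> \<in> S}"
      unfolding S_def column_config_def x by simp
  qed
  moreover have "finite S"
    unfolding S_def column_config_def by simp
  ultimately have "card A \<le> card {x \<in> S. x + \<i> \<in> S}"
    using card_mono[of "{x \<in> S. x + \<i> \<in> S}" "column_point h ` A"]
    by (simp add: card_column_point_image)
  moreover have "Suc ` A = {m \<in> {..<N}. \<not> h dvd m}"
  proof (intro set_eqI iffI)
    fix m assume m: "m \<in> {m \<in> {..<N}. \<not> h dvd m}"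
    then have "m \<noteq> 0"
      by (metis dvd_0_right mem_Collect_eq)
    then obtain n where "m = Suc n"
      using not0_implies_Suc by blast
    with m show "m \<in> Suc ` A"
      unfolding A_def by blast
  qed (auto simp: A_def)
  then have "card A = card {m \<in> {..<N}. \<not> h dvd m}"
    using card_image[OF inj_on_subset[OF inj_Suc subset_UNIV], of A] by simp
  moreover have "card {m \<in> {..<N}. \<not> h dvd m} + card {m \<in> {..<N}. h dvd m} = N"
  proof -
    have "{m \<in> {..<N}. \<not> h dvd m} \<union> {m \<in> {..<N}. h dvd m} = {..<N}"
      "{m \<in> {..<N}. \<not> h dvd m} \<inter> {m \<in> {..<N}. h dvd m} = {}"
      by blast+
    then show ?thesis
      using card_Un_disjoint[of "{m \<in> {..<N}. \<not> h dvd m}" "{m \<in> {..<N}. h dvd m}"] by simp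
  qed
  ultimately show ?thesis
    using card_multiples_lessThan[OF assms(1)] by simp
qed

lemma card_column_config_horizontal:
  fixes h N :: nat
  assumes "0 < h"
  defines "S \<equiv> column_config h N"
  shows "N \<le> card {x \<in> S. x + 1 \<in> S} + h"
proof -
  have "column_point h ` {..<N - h} \<subseteq> {x \<in> S. x + 1 \<in> S}"
  proof
    fix x assume "x \<in> column_point h ` {..<N - h}"
    then obtain n where "x = column_point h n" "n < N - h"
      by blast
    then have "n < N" "n + h < N" "x = column_point h n" "x + 1 = column_point h (n + h)"
      using column_point_add_height[OF assms(1)] by auto
    then show "x \<in> {x \<in> S. x + 1 \<in> S}"
      unfolding S_def column_config_def by auto
  qed
  moreover have "finite S"
    unfolding S_def column_config_def by simp
  ultimately have "card {..<N - h} \<le> card {x \<in> S. x + 1 \<in> S}"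
    using card_mono[of "{x \<in> S. x + 1 \<in> S}" "column_point h ` {..<N - h}"]
    by (simp add: card_column_point_image)
  then show ?thesis by simp
qed

lemma energy_column_config:
  assumes "0 < h"
    and v2: "v2 1 = -1" "\<And>r. r \<ge> r0 \<Longrightarrow> v2 r = 0" and r0: "1 < r0" "r0 < sqrt 2"
    and v3: "v3 (pi / 2) = 0" "v3 pi = 0" "v3 (3 * pi / 2) = 0"
  shows "energy v2 v3 r0 \<beta> (column_config h N)
    \<le> - 2 * real N + real h + (1 - \<beta>) * real (nat \<lceil>real N / real h\<rceil>)"
proof -
  let ?S = "column_config h N" and ?c = "nat \<lceil>real N / real h\<rceil>"
  have S: "finite ?S" "?S \<subseteq> gaussian_ints" "\<forall>x\<in>?S. Im x > 0"
    using is_config_column_config[of N h] column_config_subset_gaussian_ints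
    unfolding is_config_def by auto
  \<comment> \<open>\<open>v2\<close> is instantiated first: otherwise \<open>OF\<close> discharges \<open>\<And>r. r0 \<le> r \<Longrightarrow> v2 r = 0\<close>
    with a spurious higher-order unifier.\<close>
  have "energy v2 v3 r0 \<beta> ?S = - real (card (unit_bonds ?S)) / 2 - \<beta> * real ?c"
    using energy_gaussian_ints_config[where ?v2.0 = v2, OF S v2 r0 v3]
      card_column_config_bottom[OF assms(1)]
    by simp
  moreover have "4 * real N \<le> real (card (unit_bonds ?S)) + 2 * real ?c + 2 * real h"
    using card_unit_bonds_ge[OF S(1)] card_column_config_vertical[OF assms(1), of N]
      card_column_config_horizontal[OF assms(1), of N]
    by linarith
  ultimately show ?thesis
    by (simp add: algebra_simps)
qed

lemma m_beta_attained:
  assumes "N \<ge> 1"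
  obtains h where "1 \<le> h" "m_beta \<beta> N = 2 * real h + 2 * (1 - \<beta>) * real (nat \<lceil>real N / real h\<rceil>)"
proof -
  let ?f = "\<lambda>h. 2 * real h + 2 * (1 - \<beta>) * real (nat \<lceil>real N / real h\<rceil>)"
  have "Min (?f ` {1..N}) \<in> ?f ` {1..N}"
    using assms by (intro Min_in) auto
  then show ?thesis
    using that unfolding m_beta_def by auto
qed

theorem lemma4p1:
  fixes v2 v3 :: "real \<Rightarrow> real" and \<beta> \<epsilon> r0 :: real and N :: nat and C :: "complex set"
  assumes beta_pos: "\<beta> > 0" and eps_pos: "\<epsilon> > 0"
    and i2: "v2 1 = -1" "\<And>r. r \<ge> 0 \<Longrightarrow> r \<noteq> 1 \<Longrightarrow> v2 r > -1"
    and ii2: "1 < r0" "r0 < sqrt 2" "\<And>r. r \<ge> r0 \<Longrightarrow> v2 r = 0"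
    and iii2: "\<And>r. 0 \<le> r \<Longrightarrow> r \<le> 1 - \<epsilon> \<Longrightarrow> v2 r > 1 / \<epsilon>"
    and i3: "\<And>t. 0 < t \<Longrightarrow> t < 2 * pi \<Longrightarrow> v3 t = v3 (2 * pi - t)"
    and ii3: "v3 (pi / 2) = 0" "v3 pi = 0" "v3 (3 * pi / 2) = 0"
      "\<And>t. 0 \<le> t \<Longrightarrow> t < 2 * pi \<Longrightarrow> t \<notin> {pi / 2, pi, 3 * pi / 2} \<Longrightarrow> v3 t > 0"
    and iii3: "\<And>t. pi - \<epsilon> \<le> t \<Longrightarrow> t \<le> pi + \<epsilon> \<Longrightarrow>
                   v3 t \<ge> 4 / (pi / 10 - \<epsilon>) * \<bar>t - pi\<bar>"
      "\<And>t. pi - \<epsilon> \<le> t \<Longrightarrow> t \<le> pi + \<epsilon> \<Longrightarrow> t \<noteq> pi \<Longrightarrow>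
                   v3 t > 4 / (pi / 10 - \<epsilon>) * \<bar>t - pi\<bar>"
    and iv3: "\<And>t. 0 \<le> t \<Longrightarrow> t < 2 * pi \<Longrightarrow>
                 (\<forall>k\<in>{1, 2, 3 :: nat}. \<bar>t - real k * pi / 2\<bar> \<ge> \<epsilon>) \<Longrightarrow>
                 v3 t > max 1 (2 * \<beta>) * (4 / (1 - \<epsilon>)\<^sup>2) * (sqrt 2 + 1 / 2)\<^sup>2"
    and N_pos: "N \<ge> 1"
    and minimizer: "is_minimizer v2 v3 r0 \<beta> N C"
  shows "F_graph v2 v3 r0 \<beta> C (nat_edges r0 C) \<le> m_beta \<beta> N
         \<and> energy v2 v3 r0 \<beta> C \<le> - 2 * real N + 1 / 2 * m_beta \<beta> N"
proof -
  obtain h where h: "1 \<le> h"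
    and m: "m_beta \<beta> N = 2 * real h + 2 * (1 - \<beta>) * real (nat \<lceil>real N / real h\<rceil>)"
    using m_beta_attained[OF N_pos] .
  have C: "finite C" "card C = N"
    using minimizer unfolding is_minimizer_def is_config_def by auto
  have "energy v2 v3 r0 \<beta> C \<le> energy v2 v3 r0 \<beta> (column_config h N)"
    using minimizer is_config_column_config unfolding is_minimizer_def by blast
  also have "\<dots> \<le> - 2 * real N + real h + (1 - \<beta>) * real (nat \<lceil>real N / real h\<rceil>)"
    using h by (intro energy_column_config[where ?v2.0 = v2, OF _ i2(1) ii2(3) ii2(1,2) ii3(1-3)]) simp
  also have "\<dots> = - 2 * real N + 1 / 2 * m_beta \<beta> N"
    unfolding m by simp
  finally have "energy v2 v3 r0 \<beta> C \<le> - 2 * real N + 1 / 2 * m_beta \<beta> N" .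
  moreover have "F_graph v2 v3 r0 \<beta> C (nat_edges r0 C) = 4 * real N + 2 * energy v2 v3 r0 \<beta> C"
    using F_graph_nat_edges[OF C(1)] ii2(3) C(2) by blast
  ultimately show ?thesis
    by linarith
qed

end
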